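(* Let $X_1,\ldots,X_n$ be nonnegative i.i.d. absolutely continuous random variables with the same distribution as $X$, where $X$ has density $f$, and let $S_n=X_1+\cdots+X_n$. For every pair of integers $s,n\geq 2$, the density $f_s^{n*}$ of the $s$-iterated distribution induced by $S_n$ satisfies, for $x\geq 0$, $$f_s^{n*}(x)=\frac{\mu^{(n-1)*}_{s-1}}{\mu^{n*}_{s-1}}\,f\ast f_s^{(n-1)*}(x)+\frac{1}{\mu^{n*}_{s-1}}\sum_{\ell=1}^{s-1}\binom{s-1}{\ell}\mu^{(n-1)*}_{s-\ell-1}\,\mu_\ell\, f_{\ell+1}(x),$$ where $\mu^{k*}_j=\mathbb{E}S_k^j$ and $\mu_j=\mathbb{E}X^j$.
   Context: For a nonnegative absolutely continuous random variable $Y$ with density $f_Y$, set $\overline{T}_{Y,0}=f_Y$, $\mu_{Y,0}=1$, and for integers $s\geq 1$ define recursively $\overline{T}_{Y,s}(x)=\frac{1}{\mu_{Y,s-1}}\int_x^\infty\overline{T}_{Y,s-1}(t)\,dt$ and $\mu_{Y,s}=\int_0^\infty\overline{T}_{Y,s}(t)\,dt$ (whenever these quantities are finite). $\overline{T}_{Y,s}$ is the tail of the $s$-iterated distribution induced by $Y$, whose density is $\overline{T}_{Y,s-1}/\mu_{Y,s-1}$. Notation: $f_s$ denotes the density of the $s$-iterated distribution induced by $X$; $f_s^{k*}$ denotes the density of the $s$-iterated distribution induced by $S_k$ (so $f_s^{1*}=f_s$). Convolution of densities on $[0,\infty)$ is $g\ast h(x)=\int_0^x g(t)h(x-t)\,dt$.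 *)

theory Defs
  imports "HOL-Probability.Probability"
begin

fun iter_tail :: "(real \<Rightarrow> real) \<Rightarrow> nat \<Rightarrow> real \<Rightarrow> real" where
  "iter_tail g 0 = g"
| "iter_tail g (Suc s) =
     (\<lambda>x. (LBINT t:{x..}. iter_tail g s t) /
          (if s = 0 then 1 else (LBINT t:{0..}. iter_tail g s t)))"

definition iter_mu :: "(real \<Rightarrow> real) \<Rightarrow> nat \<Rightarrow> real" where
  "iter_mu g s = (if s = 0 then 1 else (LBINT t:{0..}. iter_tail g s t))"

definition iter_density :: "(real \<Rightarrow> real) \<Rightarrow> nat \<Rightarrow> real \<Rightarrow> real" where
  "iter_density g s x = iter_tail g (s - 1) x / iter_mu g (s - 1)"

definition conv :: "(real \<Rightarrow> real) \<Rightarrow> (real \<Rightarrow> real) \<Rightarrow> real \<Rightarrow> real" where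
  "conv g h x = (LBINT t:{0..x}. g t * h (x - t))"

end

theory Submission
  imports Defs
begin

text \<open>For a nonnegative random variable Y with a density and finite moments, the iterated tails are
  truncated moments: T_{Y,k}(x) = E (Y - x)_+^{k-1} / E Y^{k-1} for k \<ge> 1 (Tonelli, by induction on k),
  so the s-iterated density is (s - 1) E (Y - x)_+^{s-2} / E Y^{s-1}. For S_n = X_n + S_{n-1} split
  E (S_n - x)_+^{s-2} according to X_n < x or X_n \<ge> x. Conditioning on X_n, the first part is the
  convolution of f with the iterated density of S_{n-1}. On the second event
  (S_n - x)_+ = (X_n - x)_+ + S_{n-1}, so the binomial theorem and independence split it into products
  of moments of S_{n-1} and truncated moments of X_n, which are again iterated densities of f.\<close>

text \<open>ramp_pow k y x is (y - x)_+^k, but for k = 0 it is the indicator of x \<le> y rather than 1,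
  so that T_{Y,1}(x) = P(Y \<ge> x) fits the truncated-moment formula.\<close>

definition ramp_pow :: "nat \<Rightarrow> real \<Rightarrow> real \<Rightarrow> real" where
  "ramp_pow k y x = (if x \<le> y then (y - x) ^ k else 0)"

lemma ramp_pow_nonneg: "0 \<le> ramp_pow k y x"
  by (simp add: ramp_pow_def)

lemma ramp_pow_le_power: "0 \<le> y \<Longrightarrow> 0 \<le> x \<Longrightarrow> ramp_pow k y x \<le> y ^ k"
  by (auto simp: ramp_pow_def intro!: power_mono)

lemma ramp_pow_add: "ramp_pow k (a + b) x = ramp_pow k b (x - a)"
  by (simp add: ramp_pow_def algebra_simps)

lemma measurable_ramp_pow [measurable]:
  assumes [measurable]: "Y \<in> borel_measurable N" "T \<in> borel_measurable N"
  shows "(\<lambda>w. ramp_pow k (Y w) (T w)) \<in> borel_measurable N"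
  unfolding ramp_pow_def by measurable

lemma nn_integral_ramp_pow_Ici:
  "(\<integral>\<^sup>+ t. ennreal (ramp_pow k y t) * indicator {x..} t \<partial>lborel) = ennreal (ramp_pow (Suc k) y x / Suc k)"
proof (cases "x \<le> y")
  case True
  define F where "F t = - ((y - t) ^ Suc k) / real (Suc k)" for t
  have "(\<integral>\<^sup>+ t. ennreal (ramp_pow k y t) * indicator {x..} t \<partial>lborel)
      = (\<integral>\<^sup>+ t. ennreal ((y - t) ^ k) * indicator {x..y} t \<partial>lborel)"
    by (intro nn_integral_cong) (auto simp: ramp_pow_def indicator_def)
  also have "\<dots> = ennreal (F y - F x)"
    using True unfolding F_def
    by (intro nn_integral_FTC_Icc) (auto intro!: derivative_eq_intros simp del: power_Suc)
  finally show ?thesis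
    using True by (simp add: ramp_pow_def F_def del: power_Suc)
next
  case False
  then have "(\<lambda>t. ennreal (ramp_pow k y t) * indicator {x..} t) = (\<lambda>t. 0)"
    by (auto simp: ramp_pow_def indicator_def)
  then show ?thesis
    using False by (simp add: ramp_pow_def)
qed

lemma power_le_one_plus_power:
  fixes y :: real
  assumes "0 \<le> y" "j \<le> m"
  shows "y ^ j \<le> 1 + y ^ m"
proof (cases "y \<le> 1")
  case True
  then have "y ^ j \<le> 1"
    using assms by (simp add: power_le_one)
  then show ?thesis
    using assms by (simp add: add_increasing2)
next
  case False
  then have "y ^ j \<le> y ^ m"
    using assms by (intro power_increasing) auto
  then show ?thesis by simp
qed

lemma power_add_le_two_power:
  fixes a b :: real
  assumes "0 \<le> a" "0 \<le> b"
  shows "(a + b) ^ p \<le> 2 ^ p * (a ^ p + b ^ p)"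
proof -
  have "(a + b) ^ p \<le> (2 * max a b) ^ p"
    using assms by (intro power_mono) auto
  also have "\<dots> = 2 ^ p * max a b ^ p"
    by (simp add: power_mult_distrib)
  also have "\<dots> \<le> 2 ^ p * (a ^ p + b ^ p)"
    using assms by (auto simp: max_def)
  finally show ?thesis .
qed

lemma conv_mult_right: "conv g (\<lambda>t. c * h t) x = c * conv g h x"
proof -
  have "(\<lambda>t. g t * (c * h (x - t))) = (\<lambda>t. c * (g t * h (x - t)))"
    by (simp add: fun_eq_iff ac_simps)
  then show ?thesis
    unfolding conv_def by (simp add: set_integral_mult_right)
qed

context prob_space
begin

lemma integrable_power_le:
  fixes Y :: "'a \<Rightarrow> real"
  assumes [measurable]: "Y \<in> borel_measurable M" and nonneg: "AE \<omega> in M. 0 \<le> Y \<omega>"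
    and int: "integrable M (\<lambda>\<omega>. Y \<omega> ^ m)" and "j \<le> m"
  shows "integrable M (\<lambda>\<omega>. Y \<omega> ^ j)"
proof (rule Bochner_Integration.integrable_bound[of _ "\<lambda>\<omega>. 1 + Y \<omega> ^ m"])
  show "integrable M (\<lambda>\<omega>. 1 + Y \<omega> ^ m)"
    using int by simp
  show "AE \<omega> in M. norm (Y \<omega> ^ j) \<le> norm (1 + Y \<omega> ^ m)"
    using nonneg by eventually_elim (use \<open>j \<le> m\<close> power_le_one_plus_power in auto)
qed simp

lemma integrable_ramp_pow:
  fixes Y :: "'a \<Rightarrow> real"
  assumes [measurable]: "Y \<in> borel_measurable M" and nonneg: "AE \<omega> in M. 0 \<le> Y \<omega>"
    and int: "integrable M (\<lambda>\<omega>. Y \<omega> ^ k)" and "0 \<le> x"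
  shows "integrable M (\<lambda>\<omega>. ramp_pow k (Y \<omega>) x)"
proof (rule Bochner_Integration.integrable_bound[OF int])
  show "AE \<omega> in M. norm (ramp_pow k (Y \<omega>) x) \<le> norm (Y \<omega> ^ k)"
    using nonneg by eventually_elim (use \<open>0 \<le> x\<close> ramp_pow_le_power ramp_pow_nonneg in auto)
qed simp

lemma integral_split_indicator:
  fixes F A :: "'a \<Rightarrow> real"
  assumes int: "integrable M F" and [measurable]: "A \<in> borel_measurable M"
  shows "(\<integral>\<omega>. F \<omega> \<partial>M)
    = (\<integral>\<omega>. F \<omega> * indicator {..<x} (A \<omega>) \<partial>M) + (\<integral>\<omega>. F \<omega> * indicator {x..} (A \<omega>) \<partial>M)"
proof -
  have int_I: "integrable M (\<lambda>\<omega>. F \<omega> * indicator I (A \<omega>))" if "I \<in> sets borel" for I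
    by (rule Bochner_Integration.integrable_bound[OF int]) (use that int in \<open>auto simp: indicator_def\<close>)
  show ?thesis
    by (subst Bochner_Integration.integral_add[symmetric, OF int_I int_I])
       (auto intro!: Bochner_Integration.integral_cong simp: indicator_def)
qed

lemma integral_ramp_pow_0:
  fixes Y :: "'a \<Rightarrow> real"
  assumes [measurable]: "Y \<in> borel_measurable M" and nonneg: "AE \<omega> in M. 0 \<le> Y \<omega>"
  shows "(\<integral>\<omega>. ramp_pow k (Y \<omega>) 0 \<partial>M) = (\<integral>\<omega>. Y \<omega> ^ k \<partial>M)"
  using nonneg by (intro integral_cong_AE) (auto simp: ramp_pow_def elim!: eventually_mono)

lemma integrable_add_power:
  fixes A B :: "'a \<Rightarrow> real"
  assumes [measurable]: "A \<in> borel_measurable M" "B \<in> borel_measurable M"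
    and nonneg: "AE \<omega> in M. 0 \<le> A \<omega>" "AE \<omega> in M. 0 \<le> B \<omega>"
    and int: "integrable M (\<lambda>\<omega>. A \<omega> ^ p)" "integrable M (\<lambda>\<omega>. B \<omega> ^ p)"
  shows "integrable M (\<lambda>\<omega>. (A \<omega> + B \<omega>) ^ p)"
proof (rule Bochner_Integration.integrable_bound[of _ "\<lambda>\<omega>. 2 ^ p * (A \<omega> ^ p + B \<omega> ^ p)"])
  show "integrable M (\<lambda>\<omega>. 2 ^ p * (A \<omega> ^ p + B \<omega> ^ p))"
    using int by simp
  show "AE \<omega> in M. norm ((A \<omega> + B \<omega>) ^ p) \<le> norm (2 ^ p * (A \<omega> ^ p + B \<omega> ^ p))"
    using nonneg by eventually_elim (use power_add_le_two_power in auto)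
qed simp

lemma integrable_sum_power:
  fixes X :: "'i \<Rightarrow> 'a \<Rightarrow> real"
  assumes "finite I" and "\<And>i. i \<in> I \<Longrightarrow> X i \<in> borel_measurable M"
    and "\<And>i. i \<in> I \<Longrightarrow> AE \<omega> in M. 0 \<le> X i \<omega>"
    and "\<And>i. i \<in> I \<Longrightarrow> integrable M (\<lambda>\<omega>. X i \<omega> ^ p)"
  shows "integrable M (\<lambda>\<omega>. (\<Sum>i\<in>I. X i \<omega>) ^ p)"
  using assms
proof (induction I rule: finite_induct)
  case empty
  then show ?case by simp
next
  case (insert i I)
  have "AE \<omega> in M. \<forall>j\<in>I. 0 \<le> X j \<omega>"
    using insert by (intro AE_finite_allI) auto
  then have "AE \<omega> in M. 0 \<le> (\<Sum>j\<in>I. X j \<omega>)"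
    by eventually_elim (simp add: sum_nonneg)
  with insert show ?case
    by (simp add: integrable_add_power)
qed

lemma AE_distributed_neq:
  fixes Y :: "'a \<Rightarrow> real"
  assumes D: "distributed M lborel Y g"
  shows "AE \<omega> in M. Y \<omega> \<noteq> c"
proof (rule AE_I[where N = "Y -` {c} \<inter> space M"])
  have [measurable]: "Y \<in> borel_measurable M"
    using distributed_measurable[OF D] by simp
  show "Y -` {c} \<inter> space M \<in> sets M"
    by measurable
  have "emeasure M (Y -` {c} \<inter> space M) = (\<integral>\<^sup>+t. g t * indicator {c} t \<partial>lborel)"
    by (rule distributed_emeasure[OF D]) simp
  also have "\<dots> = (\<integral>\<^sup>+(t::real). 0 \<partial>lborel)"
    using AE_lborel_singleton[of c]
    by (intro nn_integral_cong_AE) (auto elim!: eventually_mono simp: indicator_def)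
  finally show "emeasure M (Y -` {c} \<inter> space M) = 0"
    by simp
qed auto

lemma distributed_moment_pos:
  fixes Y :: "'a \<Rightarrow> real"
  assumes D: "distributed M lborel Y g" and nonneg: "AE \<omega> in M. 0 \<le> Y \<omega>"
    and int: "integrable M (\<lambda>\<omega>. Y \<omega> ^ j)"
  shows "0 < (\<integral>\<omega>. Y \<omega> ^ j \<partial>M)"
proof -
  have "AE \<omega> in M. 0 < Y \<omega> ^ j"
    using nonneg AE_distributed_neq[OF D, of 0] by eventually_elim simp
  then have "(\<integral>\<omega>. 0 \<partial>M) < (\<integral>\<omega>. Y \<omega> ^ j \<partial>M)"
    by (intro integral_less_AE_space int) (auto simp: emeasure_space_1)
  then show ?thesis by simp
qed

lemma tail_integral_ramp_moment:
  fixes Y :: "'a \<Rightarrow> real"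
  assumes [measurable]: "Y \<in> borel_measurable M" and nonneg: "AE \<omega> in M. 0 \<le> Y \<omega>"
    and int: "integrable M (\<lambda>\<omega>. Y \<omega> ^ Suc k)" and "0 \<le> x"
  shows "(LBINT t:{x..}. \<integral>\<omega>. ramp_pow k (Y \<omega>) t \<partial>M) = (\<integral>\<omega>. ramp_pow (Suc k) (Y \<omega>) x \<partial>M) / Suc k"
proof -
  interpret P: pair_sigma_finite M lborel
    by (simp add: pair_sigma_finite_def lborel.sigma_finite_measure_axioms sigma_finite_measure_axioms)
  have int_k: "integrable M (\<lambda>\<omega>. Y \<omega> ^ k)"
    using integrable_power_le[OF _ nonneg int] by simp
  have "(\<integral>\<^sup>+ t. ennreal ((\<integral>\<omega>. ramp_pow k (Y \<omega>) t \<partial>M) * indicator {x..} t) \<partial>lborel)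
      = (\<integral>\<^sup>+ t. (\<integral>\<^sup>+ \<omega>. ennreal (ramp_pow k (Y \<omega>) t) * indicator {x..} t \<partial>M) \<partial>lborel)"
  proof (intro nn_integral_cong)
    fix t
    show "ennreal ((\<integral>\<omega>. ramp_pow k (Y \<omega>) t \<partial>M) * indicator {x..} t)
        = (\<integral>\<^sup>+ \<omega>. ennreal (ramp_pow k (Y \<omega>) t) * indicator {x..} t \<partial>M)"
    proof (cases "x \<le> t")
      case True
      then have "ennreal (\<integral>\<omega>. ramp_pow k (Y \<omega>) t \<partial>M) = (\<integral>\<^sup>+ \<omega>. ennreal (ramp_pow k (Y \<omega>) t) \<partial>M)"
        using \<open>0 \<le> x\<close>
        by (intro nn_integral_eq_integral[symmetric] integrable_ramp_pow[OF _ nonneg int_k])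
           (auto simp: ramp_pow_nonneg)
      then show ?thesis
        using True by (simp add: nn_integral_multc)
    qed simp
  qed
  also have "\<dots> = (\<integral>\<^sup>+ \<omega>. (\<integral>\<^sup>+ t. ennreal (ramp_pow k (Y \<omega>) t) * indicator {x..} t \<partial>lborel) \<partial>M)"
    by (rule P.Fubini') measurable
  also have "\<dots> = (\<integral>\<^sup>+ \<omega>. ennreal (ramp_pow (Suc k) (Y \<omega>) x / Suc k) \<partial>M)"
    by (simp only: nn_integral_ramp_pow_Ici)
  also have "\<dots> = ennreal (\<integral>\<omega>. ramp_pow (Suc k) (Y \<omega>) x / Suc k \<partial>M)"
    using integrable_ramp_pow[OF _ nonneg int \<open>0 \<le> x\<close>]
    by (intro nn_integral_eq_integral) (auto simp: ramp_pow_nonneg)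
  finally have "(\<integral>t. (\<integral>\<omega>. ramp_pow k (Y \<omega>) t \<partial>M) * indicator {x..} t \<partial>lborel)
      = (\<integral>\<omega>. ramp_pow (Suc k) (Y \<omega>) x / Suc k \<partial>M)"
    by (subst (asm) nn_integral_eq_integrable)
       (auto intro!: integral_nonneg_AE AE_I2 mult_nonneg_nonneg simp: ramp_pow_nonneg)
  then show ?thesis
    unfolding set_lebesgue_integral_def by (simp add: mult.commute)
qed

lemma tail_integral_ramp_moment_ratio:
  fixes Y :: "'a \<Rightarrow> real" and c :: real
  assumes "Y \<in> borel_measurable M" and "AE \<omega> in M. 0 \<le> Y \<omega>"
    and "integrable M (\<lambda>\<omega>. Y \<omega> ^ Suc k)" and "0 \<le> x"
    and T: "\<And>t. 0 \<le> t \<Longrightarrow> T t = (\<integral>\<omega>. ramp_pow k (Y \<omega>) t \<partial>M) / c"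
  shows "(LBINT t:{x..}. T t) = (\<integral>\<omega>. ramp_pow (Suc k) (Y \<omega>) x \<partial>M) / (Suc k * c)"
proof -
  have "(LBINT t:{x..}. T t) = (LBINT t:{x..}. (\<integral>\<omega>. ramp_pow k (Y \<omega>) t \<partial>M) / c)"
    using \<open>0 \<le> x\<close> by (intro set_lebesgue_integral_cong) (auto simp: T)
  then show ?thesis
    using tail_integral_ramp_moment[OF assms(1-4)] by simp
qed

lemma iter_tail_Suc_eq_ramp_moment:
  fixes Y :: "'a \<Rightarrow> real"
  assumes D: "distributed M lborel Y (\<lambda>t. ennreal (g t))" and g_nonneg: "\<And>t. 0 \<le> g t"
    and nonneg: "AE \<omega> in M. 0 \<le> Y \<omega>"
  shows "integrable M (\<lambda>\<omega>. Y \<omega> ^ k) \<Longrightarrow> 0 \<le> x \<Longrightarrow>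
    iter_tail g (Suc k) x = (\<integral>\<omega>. ramp_pow k (Y \<omega>) x \<partial>M) / (\<integral>\<omega>. Y \<omega> ^ k \<partial>M)"
proof (induction k arbitrary: x)
  case 0
  have "iter_tail g (Suc 0) x = (\<integral>t. g t * indicator {x..} t \<partial>lborel)"
    by (simp add: set_lebesgue_integral_def mult.commute)
  also have "\<dots> = (\<integral>\<omega>. indicator {x..} (Y \<omega>) \<partial>M)"
    by (rule distributed_integral[OF D]) (auto simp: g_nonneg)
  also have "\<dots> = (\<integral>\<omega>. ramp_pow 0 (Y \<omega>) x \<partial>M)"
    by (intro Bochner_Integration.integral_cong) (auto simp: ramp_pow_def indicator_def)
  finally show ?case
    by (simp add: prob_space)
next
  case (Suc k)
  have Y_meas [measurable]: "Y \<in> borel_measurable M"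
    using distributed_measurable[OF D] by simp
  have int_k: "integrable M (\<lambda>\<omega>. Y \<omega> ^ k)"
    using integrable_power_le[OF _ nonneg Suc.prems(1)] by simp
  have tail: "(LBINT t:{y..}. iter_tail g (Suc k) t)
      = (\<integral>\<omega>. ramp_pow (Suc k) (Y \<omega>) y \<partial>M) / (Suc k * (\<integral>\<omega>. Y \<omega> ^ k \<partial>M))" if "0 \<le> y" for y
    by (rule tail_integral_ramp_moment_ratio[OF _ nonneg Suc.prems(1) that Suc.IH[OF int_k]]) simp
  have "0 < (\<integral>\<omega>. Y \<omega> ^ k \<partial>M)"
    by (rule distributed_moment_pos[OF D nonneg int_k])
  have "iter_tail g (Suc (Suc k)) x
      = (LBINT t:{x..}. iter_tail g (Suc k) t) / (LBINT t:{0..}. iter_tail g (Suc k) t)"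
    by (subst iter_tail.simps(2)) simp
  also have "\<dots> = (\<integral>\<omega>. ramp_pow (Suc k) (Y \<omega>) x \<partial>M) / (\<integral>\<omega>. Y \<omega> ^ Suc k \<partial>M)"
    unfolding tail[OF Suc.prems(2)] tail[OF order_refl] integral_ramp_pow_0[OF Y_meas nonneg]
    using \<open>0 < (\<integral>\<omega>. Y \<omega> ^ k \<partial>M)\<close> by simp
  finally show ?case .
qed

lemma iter_mu_Suc_eq_moment_ratio:
  fixes Y :: "'a \<Rightarrow> real"
  assumes D: "distributed M lborel Y (\<lambda>t. ennreal (g t))" and g_nonneg: "\<And>t. 0 \<le> g t"
    and nonneg: "AE \<omega> in M. 0 \<le> Y \<omega>" and int: "integrable M (\<lambda>\<omega>. Y \<omega> ^ Suc k)"
  shows "iter_mu g (Suc k) = (\<integral>\<omega>. Y \<omega> ^ Suc k \<partial>M) / (Suc k * (\<integral>\<omega>. Y \<omega> ^ k \<partial>M))"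
proof -
  have Y_meas [measurable]: "Y \<in> borel_measurable M"
    using distributed_measurable[OF D] by simp
  have int_k: "integrable M (\<lambda>\<omega>. Y \<omega> ^ k)"
    using integrable_power_le[OF _ nonneg int] by simp
  show ?thesis
    unfolding iter_mu_def
    using tail_integral_ramp_moment_ratio[OF _ nonneg int order_refl
        iter_tail_Suc_eq_ramp_moment[OF D g_nonneg nonneg int_k]]
    by (simp add: integral_ramp_pow_0[OF Y_meas nonneg])
qed

lemma iter_density_eq_ramp_moment:
  fixes Y :: "'a \<Rightarrow> real"
  assumes D: "distributed M lborel Y (\<lambda>t. ennreal (g t))" and g_nonneg: "\<And>t. 0 \<le> g t"
    and nonneg: "AE \<omega> in M. 0 \<le> Y \<omega>" and int: "integrable M (\<lambda>\<omega>. Y \<omega> ^ Suc k)" and "0 \<le> x"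
  shows "iter_density g (Suc (Suc k)) x
    = Suc k * (\<integral>\<omega>. ramp_pow k (Y \<omega>) x \<partial>M) / (\<integral>\<omega>. Y \<omega> ^ Suc k \<partial>M)"
proof -
  have [measurable]: "Y \<in> borel_measurable M"
    using distributed_measurable[OF D] by simp
  have int_k: "integrable M (\<lambda>\<omega>. Y \<omega> ^ k)"
    using integrable_power_le[OF _ nonneg int] by simp
  have "iter_density g (Suc (Suc k)) x = iter_tail g (Suc k) x / iter_mu g (Suc k)"
    by (simp add: iter_density_def del: iter_tail.simps)
  also have "\<dots> = (\<integral>\<omega>. ramp_pow k (Y \<omega>) x \<partial>M) / (\<integral>\<omega>. Y \<omega> ^ k \<partial>M)
      / ((\<integral>\<omega>. Y \<omega> ^ Suc k \<partial>M) / (Suc k * (\<integral>\<omega>. Y \<omega> ^ k \<partial>M)))"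
    unfolding iter_tail_Suc_eq_ramp_moment[OF D g_nonneg nonneg int_k \<open>0 \<le> x\<close>]
      iter_mu_Suc_eq_moment_ratio[OF D g_nonneg nonneg int] ..
  also have "\<dots> = Suc k * (\<integral>\<omega>. ramp_pow k (Y \<omega>) x \<partial>M) / (\<integral>\<omega>. Y \<omega> ^ Suc k \<partial>M)"
    using distributed_moment_pos[OF D nonneg int_k] by simp
  finally show ?thesis .
qed

lemma nn_integral_indep_var_distributed:
  fixes A B :: "'a \<Rightarrow> real" and h :: "real \<times> real \<Rightarrow> ennreal"
  assumes DA: "distributed M lborel A f" and [measurable]: "B \<in> borel_measurable M"
    and ind: "indep_var borel A borel B" and [measurable]: "h \<in> borel_measurable (borel \<Otimes>\<^sub>M borel)"
  shows "(\<integral>\<^sup>+\<omega>. h (A \<omega>, B \<omega>) \<partial>M) = (\<integral>\<^sup>+a. f a * (\<integral>\<^sup>+\<omega>. h (a, B \<omega>) \<partial>M) \<partial>lborel)"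
proof -
  have [measurable]: "A \<in> borel_measurable M"
    using distributed_measurable[OF DA] by simp
  have "sigma_finite_measure (distr M borel B)"
    by (intro prob_space_imp_sigma_finite prob_space_distr) simp
  note Tonelli = sigma_finite_measure.nn_integral_fst[OF this, symmetric]
  have "(\<integral>\<^sup>+\<omega>. h (A \<omega>, B \<omega>) \<partial>M) = (\<integral>\<^sup>+p. h p \<partial>distr M (borel \<Otimes>\<^sub>M borel) (\<lambda>\<omega>. (A \<omega>, B \<omega>)))"
    by (subst nn_integral_distr) auto
  also have "distr M (borel \<Otimes>\<^sub>M borel) (\<lambda>\<omega>. (A \<omega>, B \<omega>)) = distr M borel A \<Otimes>\<^sub>M distr M borel B"
    using ind unfolding indep_var_distribution_eq by simp
  also have "(\<integral>\<^sup>+p. h p \<partial>(distr M borel A \<Otimes>\<^sub>M distr M borel B))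
      = (\<integral>\<^sup>+a. \<integral>\<^sup>+b. h (a, b) \<partial>distr M borel B \<partial>distr M borel A)"
    by (rule Tonelli) measurable
  also have "\<dots> = (\<integral>\<^sup>+\<omega>'. \<integral>\<^sup>+\<omega>. h (A \<omega>', B \<omega>) \<partial>M \<partial>M)"
    by (simp add: nn_integral_distr)
  also have "\<dots> = (\<integral>\<^sup>+a. f a * (\<integral>\<^sup>+\<omega>. h (a, B \<omega>) \<partial>M) \<partial>lborel)"
    by (rule distributed_nn_integral[OF DA, symmetric]) measurable
  finally show ?thesis .
qed

lemma integral_indep_var_distributed:
  fixes A B :: "'a \<Rightarrow> real" and h :: "real \<times> real \<Rightarrow> real"
  assumes DA: "distributed M lborel A (\<lambda>t. ennreal (f t))" and f_nonneg: "\<And>t. 0 \<le> f t"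
    and [measurable]: "B \<in> borel_measurable M" and ind: "indep_var borel A borel B"
    and [measurable]: "h \<in> borel_measurable (borel \<Otimes>\<^sub>M borel)" and h_nonneg: "\<And>p. 0 \<le> h p"
    and int_h: "integrable M (\<lambda>\<omega>. h (A \<omega>, B \<omega>))"
    and int_section: "\<And>a. integrable M (\<lambda>\<omega>. h (a, B \<omega>))"
  shows "(\<integral>\<omega>. h (A \<omega>, B \<omega>) \<partial>M) = (\<integral>a. f a * (\<integral>\<omega>. h (a, B \<omega>) \<partial>M) \<partial>lborel)"
proof -
  have [measurable]: "A \<in> borel_measurable M" "f \<in> borel_measurable borel"
    using distributed_measurable[OF DA] distributed_real_measurable[OF _ DA] f_nonneg by simp_all
  have "ennreal (\<integral>\<omega>. h (A \<omega>, B \<omega>) \<partial>M) = (\<integral>\<^sup>+\<omega>. ennreal (h (A \<omega>, B \<omega>)) \<partial>M)"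
    using int_h by (simp add: nn_integral_eq_integral h_nonneg)
  also have "\<dots> = (\<integral>\<^sup>+a. ennreal (f a) * (\<integral>\<^sup>+\<omega>. ennreal (h (a, B \<omega>)) \<partial>M) \<partial>lborel)"
    by (rule nn_integral_indep_var_distributed[OF DA _ ind]) measurable
  also have "\<dots> = (\<integral>\<^sup>+a. ennreal (f a * (\<integral>\<omega>. h (a, B \<omega>) \<partial>M)) \<partial>lborel)"
    using int_section by (simp add: nn_integral_eq_integral h_nonneg ennreal_mult f_nonneg integral_nonneg)
  finally show ?thesis
    by (subst (asm) eq_commute, subst (asm) nn_integral_eq_integrable)
       (auto intro!: mult_nonneg_nonneg integral_nonneg simp: f_nonneg h_nonneg)
qed

lemma conv_ramp_moment:
  fixes A B :: "'a \<Rightarrow> real"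
  assumes DA: "distributed M lborel A (\<lambda>t. ennreal (f t))" and f_nonneg: "\<And>t. 0 \<le> f t"
    and A_nonneg: "AE \<omega> in M. 0 \<le> A \<omega>"
    and [measurable]: "B \<in> borel_measurable M" and B_nonneg: "AE \<omega> in M. 0 \<le> B \<omega>"
    and int_B: "integrable M (\<lambda>\<omega>. B \<omega> ^ k)" and ind: "indep_var borel A borel B"
  shows "conv f (\<lambda>t. \<integral>\<omega>. ramp_pow k (B \<omega>) t \<partial>M) x
    = (\<integral>\<omega>. ramp_pow k (A \<omega> + B \<omega>) x * indicator {..<x} (A \<omega>) \<partial>M)"
proof -
  have [measurable]: "A \<in> borel_measurable M" "f \<in> borel_measurable borel"
    using distributed_measurable[OF DA] distributed_real_measurable[OF _ DA] f_nonneg by simp_all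
  define h where "h = (\<lambda>(a, b). indicator {0..<x} a * ramp_pow k b (x - a))"
  have [measurable]: "h \<in> borel_measurable (borel \<Otimes>\<^sub>M borel)"
    unfolding h_def by measurable
  have h_nonneg: "0 \<le> h p" for p
    by (auto simp: h_def ramp_pow_nonneg split: prod.split)
  have h_le: "h (a, b) \<le> b ^ k" if "0 \<le> b" for a b
    using that by (auto simp: h_def indicator_def intro: ramp_pow_le_power)
  have int_h: "integrable M (\<lambda>\<omega>. h (a \<omega>, B \<omega>))" if [measurable]: "a \<in> borel_measurable M" for a
  proof (rule Bochner_Integration.integrable_bound[OF int_B])
    show "AE \<omega> in M. norm (h (a \<omega>, B \<omega>)) \<le> norm (B \<omega> ^ k)"
      using B_nonneg by eventually_elim (simp add: h_nonneg h_le)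
  qed simp
  have "conv f (\<lambda>t. \<integral>\<omega>. ramp_pow k (B \<omega>) t \<partial>M) x = (\<integral>a. f a * (\<integral>\<omega>. h (a, B \<omega>) \<partial>M) \<partial>lborel)"
    unfolding conv_def set_lebesgue_integral_def h_def using AE_lborel_singleton[of x]
    by (intro integral_cong_AE) (auto elim!: eventually_mono simp: indicator_def)
  also have "\<dots> = (\<integral>\<omega>. h (A \<omega>, B \<omega>) \<partial>M)"
    by (rule integral_indep_var_distributed[symmetric, OF DA f_nonneg _ ind _ h_nonneg int_h int_h]) simp_all
  also have "\<dots> = (\<integral>\<omega>. ramp_pow k (A \<omega> + B \<omega>) x * indicator {..<x} (A \<omega>) \<partial>M)"
    using A_nonneg by (intro integral_cong_AE) (auto simp: h_def indicator_def ramp_pow_add elim!: eventually_mono)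
  finally show ?thesis .
qed

lemma binomial_ramp_moment:
  fixes A B :: "'a \<Rightarrow> real"
  assumes [measurable]: "A \<in> borel_measurable M" and A_nonneg: "AE \<omega> in M. 0 \<le> A \<omega>"
    and [measurable]: "B \<in> borel_measurable M" and B_nonneg: "AE \<omega> in M. 0 \<le> B \<omega>"
    and int_A: "integrable M (\<lambda>\<omega>. A \<omega> ^ k)" and int_B: "integrable M (\<lambda>\<omega>. B \<omega> ^ k)"
    and ind: "indep_var borel A borel B" and "0 \<le> x"
  shows "(\<integral>\<omega>. ramp_pow k (A \<omega> + B \<omega>) x * indicator {x..} (A \<omega>) \<partial>M)
    = (\<Sum>j\<le>k. real (k choose j) * (\<integral>\<omega>. ramp_pow j (A \<omega>) x \<partial>M) * (\<integral>\<omega>. B \<omega> ^ (k - j) \<partial>M))"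
proof -
  have int_Aj: "integrable M (\<lambda>\<omega>. ramp_pow j (A \<omega>) x)" if "j \<le> k" for j
    using integrable_ramp_pow[OF _ A_nonneg integrable_power_le[OF _ A_nonneg int_A that] \<open>0 \<le> x\<close>] by simp
  have int_Bj: "integrable M (\<lambda>\<omega>. B \<omega> ^ (k - j))" for j
    using integrable_power_le[OF _ B_nonneg int_B] by simp
  have ind_j: "indep_var borel (\<lambda>\<omega>. ramp_pow j (A \<omega>) x) borel (\<lambda>\<omega>. B \<omega> ^ (k - j))" for j
    using indep_var_compose[OF ind, of "\<lambda>a. ramp_pow j a x" borel "\<lambda>b. b ^ (k - j)" borel]
    by (simp add: comp_def)
  have "AE \<omega> in M. ramp_pow k (A \<omega> + B \<omega>) x * indicator {x..} (A \<omega>)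
      = (\<Sum>j\<le>k. real (k choose j) * (ramp_pow j (A \<omega>) x * B \<omega> ^ (k - j)))"
    using B_nonneg
  proof eventually_elim
    case (elim \<omega>)
    show ?case
    proof (cases "x \<le> A \<omega>")
      case True
      then have "ramp_pow k (A \<omega> + B \<omega>) x = ((A \<omega> - x) + B \<omega>) ^ k"
        using elim by (simp add: ramp_pow_def algebra_simps)
      also have "\<dots> = (\<Sum>j\<le>k. real (k choose j) * (A \<omega> - x) ^ j * B \<omega> ^ (k - j))"
        by (rule binomial_ring)
      finally show ?thesis
        using True by (simp add: ramp_pow_def mult.assoc)
    qed (simp add: ramp_pow_def)
  qed
  then have "(\<integral>\<omega>. ramp_pow k (A \<omega> + B \<omega>) x * indicator {x..} (A \<omega>) \<partial>M)
      = (\<integral>\<omega>. (\<Sum>j\<le>k. real (k choose j) * (ramp_pow j (A \<omega>) x * B \<omega> ^ (k - j))) \<partial>M)"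
    by (intro integral_cong_AE) auto
  also have "\<dots> = (\<Sum>j\<le>k. real (k choose j) * (\<integral>\<omega>. ramp_pow j (A \<omega>) x * B \<omega> ^ (k - j) \<partial>M))"
    by (simp add: int_Aj int_Bj indep_var_integrable[OF ind_j])
  also have "\<dots> = (\<Sum>j\<le>k. real (k choose j) * (\<integral>\<omega>. ramp_pow j (A \<omega>) x \<partial>M) * (\<integral>\<omega>. B \<omega> ^ (k - j) \<partial>M))"
    by (intro sum.cong refl) (simp add: indep_var_lebesgue_integral[OF ind_j int_Aj int_Bj])
  finally show ?thesis .
qed

lemma sum_moments_iter_density:
  fixes A :: "'a \<Rightarrow> real" and b :: "nat \<Rightarrow> real"
  assumes DA: "distributed M lborel A (\<lambda>t. ennreal (f t))" and f_nonneg: "\<And>t. 0 \<le> f t"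
    and A_nonneg: "AE \<omega> in M. 0 \<le> A \<omega>" and int_A: "integrable M (\<lambda>\<omega>. A \<omega> ^ Suc k)"
    and "0 \<le> x"
  shows "(\<Sum>l = 1..Suc k. real (Suc k choose l) * b (Suc k - l) * (\<integral>\<omega>. A \<omega> ^ l \<partial>M)
      * iter_density f (l + 1) x)
    = Suc k * (\<Sum>j\<le>k. real (k choose j) * (\<integral>\<omega>. ramp_pow j (A \<omega>) x \<partial>M) * b (k - j))"
proof -
  have summand: "real (Suc k choose Suc j) * b (k - j) * (\<integral>\<omega>. A \<omega> ^ Suc j \<partial>M)
      * iter_density f (Suc (Suc j)) x
      = Suc k * (real (k choose j) * (\<integral>\<omega>. ramp_pow j (A \<omega>) x \<partial>M) * b (k - j))" if "j \<le> k" for j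
  proof -
    have int_j: "integrable M (\<lambda>\<omega>. A \<omega> ^ Suc j)"
      using distributed_measurable[OF DA] that by (intro integrable_power_le[OF _ A_nonneg int_A]) simp_all
    have "0 < (\<integral>\<omega>. A \<omega> ^ Suc j \<partial>M)"
      by (rule distributed_moment_pos[OF DA A_nonneg int_j])
    then have "real (Suc k choose Suc j) * b (k - j) * (\<integral>\<omega>. A \<omega> ^ Suc j \<partial>M) * iter_density f (Suc (Suc j)) x
        = (real (Suc k choose Suc j) * real (Suc j)) * ((\<integral>\<omega>. ramp_pow j (A \<omega>) x \<partial>M) * b (k - j))"
      unfolding iter_density_eq_ramp_moment[OF DA f_nonneg A_nonneg int_j \<open>0 \<le> x\<close>]
      by (simp del: of_nat_Suc)
    also have "real (Suc k choose Suc j) * real (Suc j) = real (Suc k) * real (k choose j)"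
      by (metis Suc_times_binomial_eq of_nat_mult)
    finally show ?thesis
      by (simp only: ac_simps)
  qed
  show ?thesis
    unfolding One_nat_def sum.shift_bounds_cl_Suc_ivl atLeast0AtMost sum_distrib_left
    by (intro sum.cong refl) (simp only: diff_Suc_Suc add_Suc_right add_0_right atMost_iff summand)
qed

lemma iter_density_indep_add:
  fixes A B :: "'a \<Rightarrow> real" and f g h :: "real \<Rightarrow> real"
  assumes DA: "distributed M lborel A (\<lambda>t. ennreal (f t))" and f_nonneg: "\<And>t. 0 \<le> f t"
    and A_nonneg: "AE \<omega> in M. 0 \<le> A \<omega>"
    and DB: "distributed M lborel B (\<lambda>t. ennreal (g t))" and g_nonneg: "\<And>t. 0 \<le> g t"
    and B_nonneg: "AE \<omega> in M. 0 \<le> B \<omega>"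
    and DS: "distributed M lborel (\<lambda>\<omega>. A \<omega> + B \<omega>) (\<lambda>t. ennreal (h t))" and h_nonneg: "\<And>t. 0 \<le> h t"
    and ind: "indep_var borel A borel B"
    and int_A: "integrable M (\<lambda>\<omega>. A \<omega> ^ (s - 1))" and int_B: "integrable M (\<lambda>\<omega>. B \<omega> ^ (s - 1))"
    and "2 \<le> s" and "0 \<le> x"
  shows "iter_density h s x =
      (\<integral>\<omega>. B \<omega> ^ (s - 1) \<partial>M) / (\<integral>\<omega>. (A \<omega> + B \<omega>) ^ (s - 1) \<partial>M) * conv f (iter_density g s) x
    + 1 / (\<integral>\<omega>. (A \<omega> + B \<omega>) ^ (s - 1) \<partial>M)
        * (\<Sum>l = 1..s - 1. real (s - 1 choose l) * (\<integral>\<omega>. B \<omega> ^ (s - l - 1) \<partial>M)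
             * (\<integral>\<omega>. A \<omega> ^ l \<partial>M) * iter_density f (l + 1) x)"
proof -
  obtain k where s: "s = Suc (Suc k)"
    using \<open>2 \<le> s\<close> by (metis add_2_eq_Suc le_Suc_ex)
  have A_meas [measurable]: "A \<in> borel_measurable M" and B_meas [measurable]: "B \<in> borel_measurable M"
    using distributed_measurable[OF DA] distributed_measurable[OF DB] by simp_all
  have AB_nonneg: "AE \<omega> in M. 0 \<le> A \<omega> + B \<omega>"
    using A_nonneg B_nonneg by eventually_elim simp
  have int_Suc_k: "integrable M (\<lambda>\<omega>. A \<omega> ^ Suc k)" "integrable M (\<lambda>\<omega>. B \<omega> ^ Suc k)"
    using int_A int_B unfolding s by simp_all
  have int_AB: "integrable M (\<lambda>\<omega>. (A \<omega> + B \<omega>) ^ Suc k)"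
    by (rule integrable_add_power[OF _ _ A_nonneg B_nonneg int_Suc_k]) simp_all
  have int_k: "integrable M (\<lambda>\<omega>. A \<omega> ^ k)" "integrable M (\<lambda>\<omega>. B \<omega> ^ k)"
    by (rule integrable_power_le[OF _ A_nonneg int_Suc_k(1)], simp_all)
       (rule integrable_power_le[OF _ B_nonneg int_Suc_k(2)], simp_all)
  define R where "R I = (\<integral>\<omega>. ramp_pow k (A \<omega> + B \<omega>) x * indicator I (A \<omega>) \<partial>M)" for I
  define ES where "ES = (\<integral>\<omega>. (A \<omega> + B \<omega>) ^ Suc k \<partial>M)"
  define EB where "EB = (\<integral>\<omega>. B \<omega> ^ Suc k \<partial>M)"
  have "(\<integral>\<omega>. ramp_pow k (A \<omega> + B \<omega>) x \<partial>M) = R {..<x} + R {x..}"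
    unfolding R_def using integrable_power_le[OF _ AB_nonneg int_AB, of k]
    by (intro integral_split_indicator integrable_ramp_pow[OF _ AB_nonneg _ \<open>0 \<le> x\<close>]) simp_all
  then have density_sum: "iter_density h s x = Suc k * (R {..<x} + R {x..}) / ES"
    unfolding s ES_def using iter_density_eq_ramp_moment[OF DS h_nonneg AB_nonneg int_AB \<open>0 \<le> x\<close>] by simp
  have "conv f (iter_density g s) x = conv f (\<lambda>t. Suc k / EB * (\<integral>\<omega>. ramp_pow k (B \<omega>) t \<partial>M)) x"
    unfolding conv_def s EB_def
    by (intro set_lebesgue_integral_cong)
       (auto simp: iter_density_eq_ramp_moment[OF DB g_nonneg B_nonneg int_Suc_k(2)] simp del: of_nat_Suc)
  then have conv_part: "conv f (iter_density g s) x = Suc k / EB * R {..<x}"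
    unfolding R_def conv_mult_right conv_ramp_moment[OF DA f_nonneg A_nonneg B_meas B_nonneg int_k(2) ind] .
  have binomial_part: "(\<Sum>l = 1..s - 1. real (s - 1 choose l) * (\<integral>\<omega>. B \<omega> ^ (s - l - 1) \<partial>M)
      * (\<integral>\<omega>. A \<omega> ^ l \<partial>M) * iter_density f (l + 1) x) = Suc k * R {x..}"
    using sum_moments_iter_density[OF DA f_nonneg A_nonneg int_Suc_k(1) \<open>0 \<le> x\<close>, of "\<lambda>j. \<integral>\<omega>. B \<omega> ^ j \<partial>M"] s
    unfolding R_def binomial_ramp_moment[OF A_meas A_nonneg B_meas B_nonneg int_k ind \<open>0 \<le> x\<close>]
    by simp
  have "0 < EB" "0 < ES"
    unfolding EB_def ES_def
    using distributed_moment_pos[OF DB B_nonneg int_Suc_k(2)] distributed_moment_pos[OF DS AB_nonneg int_AB] by simp_all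
  moreover have "s - 1 = Suc k"
    using s by simp
  ultimately show ?thesis
    unfolding binomial_part density_sum conv_part
    unfolding \<open>s - 1 = Suc k\<close> ES_def[symmetric] EB_def[symmetric]
    by (simp add: field_simps)
qed

end

theorem theorem2:
  fixes M :: "'a measure" and Z :: "'a \<Rightarrow> real" and X :: "nat \<Rightarrow> 'a \<Rightarrow> real"
    and f :: "real \<Rightarrow> real" and g :: "nat \<Rightarrow> real \<Rightarrow> real"
    and s n :: nat and x :: real
  assumes "prob_space M"
    and "f \<in> borel_measurable borel" and "\<And>t. f t \<ge> 0"
    and "distributed M lborel Z (\<lambda>t. ennreal (f t))"
    and "AE \<omega> in M. Z \<omega> \<ge> 0"
    and "\<And>i. i \<in> {1..n} \<Longrightarrow> distributed M lborel (X i) (\<lambda>t. ennreal (f t))"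
    and "\<And>i. i \<in> {1..n} \<Longrightarrow> AE \<omega> in M. X i \<omega> \<ge> 0"
    and "prob_space.indep_vars M (\<lambda>_. borel) X {1..n}"
    and "\<And>k. k \<in> {n - 1, n} \<Longrightarrow> g k \<in> borel_measurable borel"
    and "\<And>k t. k \<in> {n - 1, n} \<Longrightarrow> g k t \<ge> 0"
    and "\<And>k. k \<in> {n - 1, n} \<Longrightarrow>
           distributed M lborel (\<lambda>\<omega>. \<Sum>i\<in>{1..k}. X i \<omega>) (\<lambda>t. ennreal (g k t))"
    and "integrable M (\<lambda>\<omega>. Z \<omega> ^ (s - 1))"
    and "2 \<le> s" and "2 \<le> n" and "0 \<le> x"
  shows "iter_density (g n) s x =
      (\<integral>\<omega>. (\<Sum>i\<in>{1..n-1}. X i \<omega>) ^ (s - 1) \<partial>M)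
        / (\<integral>\<omega>. (\<Sum>i\<in>{1..n}. X i \<omega>) ^ (s - 1) \<partial>M)
        * conv f (iter_density (g (n - 1)) s) x
    + 1 / (\<integral>\<omega>. (\<Sum>i\<in>{1..n}. X i \<omega>) ^ (s - 1) \<partial>M)
        * (\<Sum>l = 1..s - 1. real (s - 1 choose l)
             * (\<integral>\<omega>. (\<Sum>i\<in>{1..n-1}. X i \<omega>) ^ (s - l - 1) \<partial>M)
             * (\<integral>\<omega>. Z \<omega> ^ l \<partial>M)
             * iter_density f (l + 1) x)"
proof -
  interpret prob_space M by fact
  \<comment> \<open>Measurability of f and g k follows from the distributed hypotheses, and Z enters only
    through its moments, which are those of X n.\<close>
  note DX = assms(6) and X_nonneg = assms(7)
  let ?S = "\<lambda>\<omega>. \<Sum>i\<in>{1..n - 1}. X i \<omega>"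
  have n: "n \<in> {1..n}" "{1..n} = insert n {1..n - 1}" "n \<notin> {1..n - 1}"
    using \<open>2 \<le> n\<close> by auto
  have X_meas: "X i \<in> borel_measurable M" if "i \<in> {1..n}" for i
    using distributed_measurable[OF DX[OF that]] by simp
  have moment_X: "(\<integral>\<omega>. X i \<omega> ^ j \<partial>M) = (\<integral>\<omega>. Z \<omega> ^ j \<partial>M)"
    "integrable M (\<lambda>\<omega>. X i \<omega> ^ j) \<longleftrightarrow> integrable M (\<lambda>\<omega>. Z \<omega> ^ j)" if "i \<in> {1..n}" for i j
    using distributed_integral[OF DX[OF that], of "\<lambda>t. t ^ j"] distributed_integral[OF assms(4), of "\<lambda>t. t ^ j"]
      distributed_integrable[OF DX[OF that], of "\<lambda>t. t ^ j"] distributed_integrable[OF assms(4), of "\<lambda>t. t ^ j"]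
      assms(3) by simp_all
  have sum_n: "(\<Sum>i\<in>{1..n}. X i \<omega>) = X n \<omega> + ?S \<omega>" for \<omega>
    unfolding n(2) using n(3) by simp
  have "AE \<omega> in M. \<forall>i\<in>{1..n - 1}. 0 \<le> X i \<omega>"
    using X_nonneg by (intro AE_finite_allI) auto
  then have S_nonneg: "AE \<omega> in M. 0 \<le> ?S \<omega>"
    by eventually_elim (blast intro: sum_nonneg)
  show ?thesis
    unfolding sum_n moment_X(1)[OF n(1), symmetric]
  proof (rule iter_density_indep_add[OF DX[OF n(1)] assms(3) X_nonneg[OF n(1)] _ _ S_nonneg])
    show "distributed M lborel (\<lambda>\<omega>. X n \<omega> + ?S \<omega>) (\<lambda>t. ennreal (g n t))"
      using assms(11)[of n, unfolded sum_n] by simp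
    show "indep_var borel (X n) borel ?S"
      using assms(8) n by (intro indep_vars_sum) simp_all
    show "integrable M (\<lambda>\<omega>. ?S \<omega> ^ (s - 1))"
      using X_meas X_nonneg moment_X(2) assms(12) by (intro integrable_sum_power) auto
  qed (use assms(10-12) moment_X(2)[OF n(1)] \<open>2 \<le> s\<close> \<open>0 \<le> x\<close> in auto)
qed

end
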